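(* Let $n\geq 1$ and let $E,F\subseteq\mathbb{R}^n$ be arbitrary sets (not necessarily Borel). Let $G$ be either the group of rigid motions of $\mathbb{R}^n$ or the group of similarities of $\mathbb{R}^n$. Then for almost all $\sigma\in G$, \[\dim_H\big(E\cap\sigma(F)\big)\leq\max\{0,\dim_H(E\times F)-n\}\,.\]
   Context: $\dim_H$ denotes (classical) Hausdorff dimension, defined for every subset of a Euclidean space; $E\times F\subseteq\mathbb{R}^{2n}$ is the Cartesian product. A rigid motion is a map $x\mapsto Rx+z$ with $R$ an orthogonal transformation (rotation) and $z\in\mathbb{R}^n$; a similarity is a map $x\mapsto cRx+z$ with additionally a scaling factor $c>0$. "Almost all $\sigma\in G$" is with respect to the natural (Haar) measure on $G$, i.e., the product of the natural measure on rotations (and Lebesgue measure on scalings $c>0$ in the similarity case) with Lebesgue measure on translations $z\in\mathbb{R}^n$. *)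

theory Defs
  imports "HOL-Analysis.Analysis" "HOL-Probability.Probability"
begin

text \<open>Contribution of one covering set to the s-dimensional Hausdorff sum,
  with the usual conventions: the empty set contributes 0, and for s = 0 a
  nonempty set contributes 1 (diam U to the power 0 = 1).\<close>
definition hcost :: "real \<Rightarrow> 'a::metric_space set \<Rightarrow> ennreal" where
  "hcost s U = (if U = {} then 0 else if s = 0 then 1 else ennreal (diameter U powr s))"

definition hausdorff_approx :: "real \<Rightarrow> real \<Rightarrow> 'a::metric_space set \<Rightarrow> ennreal" where
  "hausdorff_approx s \<delta> A =
     (INF U \<in> {U :: nat \<Rightarrow> 'a set. A \<subseteq> (\<Union>i. U i) \<and>
                  (\<forall>i. bounded (U i) \<and> diameter (U i) \<le> \<delta>)}.
        (\<Sum>i. hcost s (U i)))"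

definition hausdorff_outer :: "real \<Rightarrow> 'a::metric_space set \<Rightarrow> ennreal" where
  "hausdorff_outer s A = (SUP \<delta> \<in> {0<..}. hausdorff_approx s \<delta> A)"

definition hausdorff_dim :: "'a::metric_space set \<Rightarrow> real" where
  "hausdorff_dim A = Inf {s. 0 \<le> s \<and> hausdorff_outer s A = 0}"

definition haar_orthogonal :: "(real^'n^'n) measure \<Rightarrow> bool" where
  "haar_orthogonal M \<longleftrightarrow>
     sets M = sets (restrict_space borel {R. orthogonal_matrix R}) \<and>
     space M = {R. orthogonal_matrix R} \<and>
     prob_space M \<and>
     (\<forall>Q. orthogonal_matrix Q \<longrightarrow>
        (\<forall>A \<in> sets M. emeasure M ((\<lambda>R. Q ** R) ` A) = emeasure M A))"

end

theory Submission
  imports Defs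
begin

text \<open>
  If \<open>H^(t+n)(E \<times> F) = 0\<close>, cover \<open>E \<times> F\<close> by sets \<open>U\<^sub>i\<close> of small diameter \<open>d\<^sub>i\<close> with
  \<open>\<Sum> d\<^sub>i^(t+n)\<close> small. For a \<open>K\<close>-Lipschitz map \<open>f\<close>, the slice \<open>E \<inter> (f(F) + z)\<close> is covered by
  the projections of the \<open>U\<^sub>i\<close> intersected with the graph of \<open>f + z\<close>, and the \<open>i\<close>-th piece is
  nonempty only for \<open>z\<close> in a ball of radius \<open>(1 + K) d\<^sub>i\<close>. Integrating over \<open>z\<close>, the
  \<open>t\<close>-dimensional Hausdorff sum of the slice has integral at most \<open>C \<Sum> d\<^sub>i^(t+n)\<close>, so almost
  every translate gives an \<open>H^t\<close>-null slice. A rotation, possibly scaled, only enters as the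
  Lipschitz map \<open>f\<close>, and Fubini over it concludes. The slices themselves need not be
  measurable, so Fubini is applied to an explicit measurable majorant instead.
\<close>

section \<open>Hausdorff measure and dimension\<close>

lemma hausdorff_approx_eq_0_iff:
  "hausdorff_approx s \<delta> A = 0 \<longleftrightarrow>
   (\<forall>e>0. \<exists>U. A \<subseteq> (\<Union>i. U i) \<and> (\<forall>i. bounded (U i) \<and> diameter (U i) \<le> \<delta>) \<and>
      (\<Sum>i. hcost s (U i)) < ennreal e)"
proof
  assume h: "hausdorff_approx s \<delta> A = 0"
  show "\<forall>e>0. \<exists>U. A \<subseteq> (\<Union>i. U i) \<and> (\<forall>i. bounded (U i) \<and> diameter (U i) \<le> \<delta>) \<and>
      (\<Sum>i. hcost s (U i)) < ennreal e"
  proof (intro allI impI)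
    fix e :: real assume "e > 0"
    then have "hausdorff_approx s \<delta> A < ennreal e" using h by simp
    then show "\<exists>U. A \<subseteq> (\<Union>i. U i) \<and> (\<forall>i. bounded (U i) \<and> diameter (U i) \<le> \<delta>) \<and>
      (\<Sum>i. hcost s (U i)) < ennreal e"
      unfolding hausdorff_approx_def by (auto simp: INF_less_iff)
  qed
next
  assume h: "\<forall>e>0. \<exists>U. A \<subseteq> (\<Union>i. U i) \<and> (\<forall>i. bounded (U i) \<and> diameter (U i) \<le> \<delta>) \<and>
      (\<Sum>i. hcost s (U i)) < ennreal e"
  have "hausdorff_approx s \<delta> A \<le> 0 + ennreal e" if "e > 0" for e
  proof -
    obtain U where U: "A \<subseteq> (\<Union>i. U i)" "\<forall>i. bounded (U i) \<and> diameter (U i) \<le> \<delta>"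
      "(\<Sum>i. hcost s (U i)) < ennreal e" using h \<open>e>0\<close> by blast
    have "hausdorff_approx s \<delta> A \<le> (\<Sum>i. hcost s (U i))"
      unfolding hausdorff_approx_def using U(1,2) by (intro INF_lower) auto
    then show ?thesis using U(3) by simp
  qed
  then show "hausdorff_approx s \<delta> A = 0"
    by (metis ennreal_le_epsilon le_zero_eq)
qed

lemma hausdorff_outer_eq_0_iff:
  "hausdorff_outer s A = 0 \<longleftrightarrow> (\<forall>\<delta>>0. hausdorff_approx s \<delta> A = 0)"
  unfolding hausdorff_outer_def bot_ennreal[symmetric] SUP_bot_conv by auto

lemma hausdorff_approx_antimono:
  assumes "\<delta> \<le> \<delta>'" shows "hausdorff_approx s \<delta>' A \<le> hausdorff_approx s \<delta> A"
  unfolding hausdorff_approx_def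
  by (rule INF_superset_mono) (use assms in \<open>auto intro: order_trans\<close>)

lemma hausdorff_approx_mono:
  assumes "A \<subseteq> B" shows "hausdorff_approx s \<delta> A \<le> hausdorff_approx s \<delta> B"
  unfolding hausdorff_approx_def
  by (rule INF_superset_mono) (use assms in \<open>auto intro: order_trans\<close>)

lemma hausdorff_outer_eq_0_subset:
  assumes "A \<subseteq> B" "hausdorff_outer s B = 0" shows "hausdorff_outer s A = 0"
  using assms hausdorff_approx_mono[OF assms(1)] unfolding hausdorff_outer_eq_0_iff
  by (metis le_zero_eq)

lemma hausdorff_dim_le:
  assumes "0 \<le> t" "hausdorff_outer t A = 0" shows "hausdorff_dim A \<le> t"
  unfolding hausdorff_dim_def
  by (rule cInf_lower) (use assms in \<open>auto intro: bdd_belowI[where m=0]\<close>)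

lemma hcost_antimono:
  assumes "0 \<le> s'" "s' < s" "bounded U" "diameter U \<le> 1"
  shows "hcost s U \<le> hcost s' U"
proof -
  have d0: "0 \<le> diameter U" using assms(3) by (rule diameter_ge_0)
  show ?thesis
  proof (cases "U = {}")
    case True then show ?thesis by (simp add: hcost_def)
  next
    case False
    have "diameter U powr s \<le> 1" using d0 assms by (intro powr_le1) auto
    moreover have "diameter U powr s \<le> diameter U powr s'" if "s' \<noteq> 0"
      using d0 assms that by (intro powr_mono') auto
    ultimately show ?thesis using False assms
      by (auto simp: hcost_def ennreal_leI)
  qed
qed

lemma hausdorff_outer_eq_0_mono:
  assumes "0 \<le> s'" "s' < s" "hausdorff_outer s' A = 0"
  shows "hausdorff_outer s A = 0"
  unfolding hausdorff_outer_eq_0_iff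
proof (intro allI impI)
  fix \<delta> :: real assume "\<delta> > 0"
  then have "min \<delta> 1 > 0" by simp
  then have "hausdorff_approx s' (min \<delta> 1) A = 0"
    using assms(3) unfolding hausdorff_outer_eq_0_iff by blast
  show "hausdorff_approx s \<delta> A = 0" unfolding hausdorff_approx_eq_0_iff
  proof (intro allI impI)
    fix e :: real assume "e > 0"
    then obtain U where U: "A \<subseteq> (\<Union>i. U i)" "\<forall>i. bounded (U i) \<and> diameter (U i) \<le> min \<delta> 1"
      "(\<Sum>i. hcost s' (U i)) < ennreal e"
      using \<open>hausdorff_approx s' (min \<delta> 1) A = 0\<close> hausdorff_approx_eq_0_iff by metis
    have "(\<Sum>i. hcost s (U i)) \<le> (\<Sum>i. hcost s' (U i))"
      using U(2) assms by (intro suminf_le hcost_antimono) auto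
    then show "\<exists>U. A \<subseteq> (\<Union>i. U i) \<and> (\<forall>i. bounded (U i) \<and> diameter (U i) \<le> \<delta>) \<and>
      (\<Sum>i. hcost s (U i)) < ennreal e"
      using U by (intro exI[of _ U]) auto
  qed
qed

lemma hausdorff_approx_UN_eq_0:
  assumes "\<And>L::nat. hausdorff_approx s \<delta> (A L) = 0"
  shows "hausdorff_approx s \<delta> (\<Union>L. A L) = 0"
  unfolding hausdorff_approx_eq_0_iff
proof (intro allI impI)
  fix e :: real assume "e > 0"
  have "\<forall>L. \<exists>U. A L \<subseteq> (\<Union>i. U i) \<and> (\<forall>i. bounded (U i) \<and> diameter (U i) \<le> \<delta>) \<and>
      (\<Sum>i. hcost s (U i)) < ennreal (e/4 * (1/2)^L)"
    using assms hausdorff_approx_eq_0_iff \<open>e>0\<close> by (metis divide_pos_pos half_gt_zero_iff mult_pos_pos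
        zero_less_numeral zero_less_one zero_less_power)
  then obtain UU where UU: "\<And>L. A L \<subseteq> (\<Union>i. UU L i)"
    "\<And>L i. bounded (UU L i) \<and> diameter (UU L i) \<le> \<delta>"
    "\<And>L. (\<Sum>i. hcost s (UU L i)) < ennreal (e/4 * (1/2)^L)"
    by metis
  define W where "W k = (case prod_decode k of (L, i) \<Rightarrow> UU L i)" for k
  have "(\<Sum>k. hcost s (W k)) = (\<Sum>L. \<Sum>i. hcost s (UU L i))"
    unfolding W_def
    using suminf_ennreal_2dimen[of "\<lambda>L. \<Sum>i. hcost s (UU L i)" "\<lambda>(L,i). hcost s (UU L i)"]
    by (simp add: case_prod_beta split_beta)
  also have "\<dots> \<le> (\<Sum>L. ennreal (e/4 * (1/2)^L))"
    using UU(3) by (intro suminf_le) (auto intro: less_imp_le)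
  also have "\<dots> = ennreal (\<Sum>L. e/4 * (1/2)^L)"
    using \<open>e>0\<close> by (intro suminf_ennreal2) (auto intro!: summable_mult summable_geometric)
  also have "(\<Sum>L. e/4 * (1/2::real)^L) = e/2"
    using suminf_mult[OF summable_geometric[of "1/2::real"], of "e/4"] suminf_geometric[of "1/2::real"]
    by simp
  also have "ennreal (e/2) < ennreal e" using \<open>e>0\<close> by (simp add: ennreal_lessI)
  finally have "(\<Sum>k. hcost s (W k)) < ennreal e" .
  moreover have "(\<Union>L. A L) \<subseteq> (\<Union>k. W k)"
  proof
    fix x assume "x \<in> (\<Union>L. A L)"
    then obtain L i where "x \<in> UU L i" using UU(1) by blast
    then have "x \<in> W (prod_encode (L, i))" by (simp add: W_def)
    then show "x \<in> (\<Union>k. W k)" by blast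
  qed
  moreover have "\<forall>k. bounded (W k) \<and> diameter (W k) \<le> \<delta>"
    using UU(2) by (simp add: W_def split: prod.split)
  ultimately show "\<exists>U. (\<Union>L. A L) \<subseteq> (\<Union>i. U i) \<and> (\<forall>i. bounded (U i) \<and> diameter (U i) \<le> \<delta>) \<and>
      (\<Sum>i. hcost s (U i)) < ennreal e"
    by blast
qed

lemma diameter_ball_le:
  fixes x :: "'a::real_normed_vector"
  assumes "0 \<le> \<rho>"
  shows "diameter (ball x \<rho>) \<le> 2 * \<rho>"
proof (rule diameter_le)
  show "ball x \<rho> \<noteq> {} \<or> 0 \<le> 2 * \<rho>" using assms by simp
  fix y z assume "y \<in> ball x \<rho>" "z \<in> ball x \<rho>"
  then have "dist x y < \<rho>" "dist x z < \<rho>" by auto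
  moreover have "dist y z \<le> dist x y + dist x z" by (metis dist_commute dist_triangle)
  ultimately show "norm (y - z) \<le> 2 * \<rho>" by (simp add: dist_norm)
qed

lemma hausdorff_approx_le_card_balls:
  fixes A :: "'a::real_normed_vector set"
  assumes "finite T" "A \<subseteq> (\<Union>x\<in>T. ball x \<rho>)" "0 < \<rho>" "2 * \<rho> \<le> \<delta>" "s > 0"
  shows "hausdorff_approx s \<delta> A \<le> of_nat (card T) * ennreal ((2 * \<rho>) powr s)"
proof -
  obtain xs where xs: "set xs = T" "distinct xs" using finite_distinct_list[OF assms(1)] by blast
  define U where "U i = (if i < length xs then ball (xs!i) \<rho> else {})" for i
  have "A \<subseteq> (\<Union>i. U i)"
  proof
    fix x assume "x \<in> A"
    then obtain t where "t \<in> T" "x \<in> ball t \<rho>" using assms(2) by blast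
    then obtain i where "i < length xs" "xs!i = t" using xs(1) by (metis in_set_conv_nth)
    then show "x \<in> (\<Union>i. U i)" using \<open>x \<in> ball t \<rho>\<close> by (auto simp: U_def)
  qed
  moreover have "\<forall>i. bounded (U i) \<and> diameter (U i) \<le> \<delta>"
    using diameter_ball_le[of \<rho>] assms(3,4) by (auto simp: U_def intro: order_trans)
  ultimately have "hausdorff_approx s \<delta> A \<le> (\<Sum>i. hcost s (U i))"
    unfolding hausdorff_approx_def by (intro INF_lower) auto
  also have "(\<Sum>i. hcost s (U i)) = (\<Sum>i<length xs. hcost s (U i))"
    by (rule suminf_finite) (auto simp: U_def hcost_def)
  also have "\<dots> \<le> of_nat (card {..<length xs}) * ennreal ((2 * \<rho>) powr s)"
  proof (rule sum_bounded_above)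
    fix i assume "i \<in> {..<length xs}"
    then have "U i = ball (xs!i) \<rho>" by (simp add: U_def)
    moreover have "diameter (ball (xs!i) \<rho>) powr s \<le> (2 * \<rho>) powr s"
      using diameter_ball_le[of \<rho> "xs!i"] assms(3,5) diameter_ge_0[OF bounded_ball]
      by (intro powr_mono2) auto
    ultimately show "hcost s (U i) \<le> ennreal ((2 * \<rho>) powr s)"
      using assms(3,5) by (auto simp: hcost_def intro: ennreal_leI)
  qed
  also have "card {..<length xs} = card T" using xs distinct_card by fastforce
  finally show ?thesis .
qed

lemma abs_sub_min_floor_le_1:
  fixes u :: real
  assumes "0 \<le> u" "u \<le> real N" "N > 0"
  shows "\<bar>u - real (min (N - 1) (nat \<lfloor>u\<rfloor>))\<bar> \<le> 1"
proof -
  have floor: "real (nat \<lfloor>u\<rfloor>) \<le> u" "u < real (nat \<lfloor>u\<rfloor>) + 1"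
    using assms(1) by (simp_all add: of_nat_nat)
  show ?thesis
  proof (cases "nat \<lfloor>u\<rfloor> \<le> N - 1")
    case True
    then have "min (N - 1) (nat \<lfloor>u\<rfloor>) = nat \<lfloor>u\<rfloor>" by simp
    then show ?thesis using floor by (simp only: abs_le_iff) linarith
  next
    case False
    then have "real N \<le> real (nat \<lfloor>u\<rfloor>)" by simp
    then have "u = real N" using floor(1) assms(2) by linarith
    then show ?thesis using False assms(3) by (simp add: min_def of_nat_diff)
  qed
qed

lemma box_subset_grid_balls:
  fixes h :: real
  assumes "0 < a" "N > 0" "h = 2 * a / N"
  shows "{x::'a::euclidean_space. \<forall>b\<in>Basis. \<bar>x \<bullet> b\<bar> \<le> a} \<subseteq>
    (\<Union>g \<in> (\<lambda>j. \<Sum>b\<in>Basis. (real (j b) * h - a) *\<^sub>R b) ` (PiE Basis (\<lambda>_. {..<N})).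
        ball g ((real DIM('a) + 1) * h))"
proof
  fix x :: 'a assume x: "x \<in> {x. \<forall>b\<in>Basis. \<bar>x \<bullet> b\<bar> \<le> a}"
  have hpos: "h > 0" using assms by simp
  define j where "j b = (if b \<in> Basis then min (N - 1) (nat \<lfloor>(x \<bullet> b + a) / h\<rfloor>) else undefined)" for b
  define g where "g = (\<Sum>b\<in>Basis. (real (j b) * h - a) *\<^sub>R b)"
  have jP: "j \<in> PiE Basis (\<lambda>_. {..<N})"
    using assms(2) by (auto simp: j_def PiE_def extensional_def)
  have comp: "\<bar>(x - g) \<bullet> b\<bar> \<le> h" if b: "b \<in> Basis" for b
  proof -
    define u where "u = (x \<bullet> b + a) / h"
    have "x \<bullet> b + a \<le> 2 * a" "0 \<le> x \<bullet> b + a" using x b by (auto simp: abs_le_iff)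
    then have "u \<le> 2 * a / h" "0 \<le> u" using hpos by (auto simp: u_def intro: divide_right_mono)
    moreover have "2 * a / h = real N" using assms hpos by (simp add: field_simps)
    ultimately have "0 \<le> u" "u \<le> real N" by simp_all
    then have "\<bar>u - real (j b)\<bar> \<le> 1"
      using abs_sub_min_floor_le_1[of u N] assms(2) b by (simp add: j_def u_def)
    moreover have "(x - g) \<bullet> b = h * (u - real (j b))"
    proof -
      have "g \<bullet> b = real (j b) * h - a" unfolding g_def using b by (rule inner_sum_left_Basis)
      moreover have "h * u = x \<bullet> b + a" using hpos by (simp add: u_def)
      ultimately show ?thesis by (simp add: inner_diff_left right_diff_distrib algebra_simps)
    qed
    ultimately show ?thesis using hpos by (simp add: abs_mult)
  qed
  have "norm (x - g) \<le> (\<Sum>b\<in>Basis. \<bar>(x - g) \<bullet> b\<bar>)" by (rule norm_le_l1)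
  also have "\<dots> \<le> (\<Sum>b\<in>(Basis::'a set). h)" using comp by (intro sum_mono) auto
  also have "\<dots> < (real DIM('a) + 1) * h" using hpos by (simp add: field_simps)
  finally have "x \<in> ball g ((real DIM('a) + 1) * h)" by (simp add: dist_norm norm_minus_commute)
  then show "x \<in> (\<Union>g \<in> (\<lambda>j. \<Sum>b\<in>Basis. (real (j b) * h - a) *\<^sub>R b) ` (PiE Basis (\<lambda>_. {..<N})).
        ball g ((real DIM('a) + 1) * h))" using jP unfolding g_def by blast
qed

lemma hausdorff_approx_box_le:
  fixes N :: nat
  defines "m \<equiv> DIM('a)"
  assumes "0 < a" "N > 0" "4 * (real m + 1) * a / N \<le> \<delta>"
  shows "hausdorff_approx (real m + 1) \<delta> {x::'a::euclidean_space. \<forall>b\<in>Basis. \<bar>x \<bullet> b\<bar> \<le> a}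
           \<le> ennreal ((4 * (real m + 1) * a) ^ (m + 1) / N)"
proof -
  define h where "h = 2 * a / N"
  define \<rho> where "\<rho> = (real m + 1) * h"
  define T where "T = (\<lambda>j. \<Sum>b\<in>Basis. (real (j b) * h - a) *\<^sub>R (b::'a)) ` (PiE Basis (\<lambda>_. {..<N}))"
  have \<rho>: "2 * \<rho> = 4 * (real m + 1) * a / N" by (simp add: \<rho>_def h_def)
  have "\<rho> > 0" using assms by (simp add: \<rho>_def h_def)
  have "finite T" unfolding T_def by (intro finite_imageI finite_PiE) auto
  have "card T \<le> card (PiE (Basis::'a set) (\<lambda>_. {..<N}))"
    unfolding T_def by (intro card_image_le finite_PiE) auto
  then have card: "card T \<le> N ^ m" by (simp add: card_PiE m_def)
  have "hausdorff_approx (real m + 1) \<delta> {x::'a. \<forall>b\<in>Basis. \<bar>x \<bullet> b\<bar> \<le> a}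
      \<le> of_nat (card T) * ennreal ((2 * \<rho>) powr (real m + 1))"
  proof (rule hausdorff_approx_le_card_balls)
    show "{x::'a. \<forall>b\<in>Basis. \<bar>x \<bullet> b\<bar> \<le> a} \<subseteq> (\<Union>x\<in>T. ball x \<rho>)"
      unfolding T_def \<rho>_def m_def by (rule box_subset_grid_balls[OF assms(2,3) h_def])
    show "2 * \<rho> \<le> \<delta>" using assms(4) by (simp only: \<rho>)
  qed (use \<open>\<rho> > 0\<close> \<open>finite T\<close> in auto)
  also have "(2 * \<rho>) powr (real m + 1) = (2 * \<rho>) ^ (m + 1)"
    using powr_realpow[of "2 * \<rho>" "m + 1"] \<open>\<rho> > 0\<close> by (simp add: add.commute)
  also have "of_nat (card T) * ennreal ((2 * \<rho>) ^ (m + 1)) = ennreal (real (card T) * (2 * \<rho>) ^ (m + 1))"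
    by (simp add: ennreal_mult' ennreal_of_nat_eq_real_of_nat)
  also have "\<dots> \<le> ennreal ((4 * (real m + 1) * a) ^ (m + 1) / N)"
  proof (rule ennreal_leI)
    have "real (card T) * (2 * \<rho>) ^ (m + 1) \<le> real N ^ m * (2 * \<rho>) ^ (m + 1)"
      using card \<open>\<rho> > 0\<close> by (intro mult_right_mono) (auto simp flip: of_nat_power)
    also have "\<dots> = (4 * (real m + 1) * a) ^ (m + 1) / N"
    proof -
      have "(2 * \<rho>) ^ (m + 1) = (4 * (real m + 1) * a) ^ (m + 1) / real N ^ (m + 1)"
        by (simp only: \<rho> power_divide)
      then show ?thesis using assms(3) by (simp add: field_simps)
    qed
    finally show "real (card T) * (2 * \<rho>) ^ (m + 1) \<le> (4 * (real m + 1) * a) ^ (m + 1) / N" .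
  qed
  finally show ?thesis .
qed

lemma hausdorff_approx_box_eq_0:
  assumes "0 < a" "0 < \<delta>"
  shows "hausdorff_approx (real DIM('a) + 1) \<delta> {x::'a::euclidean_space. \<forall>b\<in>Basis. \<bar>x \<bullet> b\<bar> \<le> a} = 0"
proof -
  let ?m = "DIM('a)"
  define C where "C = (4 * (real ?m + 1) * a) ^ (?m + 1)"
  have "hausdorff_approx (real ?m + 1) \<delta> {x::'a. \<forall>b\<in>Basis. \<bar>x \<bullet> b\<bar> \<le> a} \<le> 0 + ennreal e"
    if "e > 0" for e
  proof -
    obtain N :: nat where N: "C / e < N" "4 * (real ?m + 1) * a / \<delta> < N"
      using reals_Archimedean2[of "max (C / e) (4 * (real ?m + 1) * a / \<delta>)"] by auto
    have "0 < 4 * (real ?m + 1) * a / \<delta>" using assms by simp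
    then have "N > 0" using N(2) by linarith
    have "C \<le> e * N" using N(1) \<open>e > 0\<close> by (simp add: divide_less_eq mult.commute)
    then have "C / N \<le> e" using \<open>N > 0\<close> by (intro mult_imp_div_pos_le) auto
    have "4 * (real ?m + 1) * a \<le> \<delta> * N" using N(2) assms(2) by (simp add: divide_less_eq mult.commute)
    then have "4 * (real ?m + 1) * a / N \<le> \<delta>" using \<open>N > 0\<close> by (intro mult_imp_div_pos_le) auto
    then have "hausdorff_approx (real ?m + 1) \<delta> {x::'a. \<forall>b\<in>Basis. \<bar>x \<bullet> b\<bar> \<le> a} \<le> ennreal (C / N)"
      unfolding C_def by (rule hausdorff_approx_box_le[OF assms(1) \<open>N > 0\<close>])
    also have "\<dots> \<le> ennreal e" using \<open>C / N \<le> e\<close> by (rule ennreal_leI)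
    finally show ?thesis by simp
  qed
  then have "hausdorff_approx (real ?m + 1) \<delta> {x::'a. \<forall>b\<in>Basis. \<bar>x \<bullet> b\<bar> \<le> a} \<le> 0"
    by (rule ennreal_le_epsilon)
  then show ?thesis by simp
qed

lemma hausdorff_outer_UNIV_eq_0:
  "hausdorff_outer (real DIM('a) + 1) (UNIV::'a::euclidean_space set) = 0"
  unfolding hausdorff_outer_eq_0_iff
proof (intro allI impI)
  fix \<delta> :: real assume "\<delta> > 0"
  have "UNIV = (\<Union>L::nat. {x::'a. \<forall>b\<in>Basis. \<bar>x \<bullet> b\<bar> \<le> real L + 1})"
  proof (intro set_eqI iffI)
    fix x :: 'a
    obtain L :: nat where "norm x \<le> real L" using real_arch_simple by blast
    then have "\<forall>b\<in>Basis. \<bar>x \<bullet> b\<bar> \<le> real L + 1"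
      using Basis_le_norm[of _ x] by (meson add_increasing2 order_trans zero_le_one)
    then show "x \<in> (\<Union>L::nat. {x::'a. \<forall>b\<in>Basis. \<bar>x \<bullet> b\<bar> \<le> real L + 1})" by blast
  qed simp
  moreover have "hausdorff_approx (real DIM('a) + 1) \<delta> (\<Union>L::nat. {x::'a. \<forall>b\<in>Basis. \<bar>x \<bullet> b\<bar> \<le> real L + 1}) = 0"
    using \<open>\<delta> > 0\<close> by (intro hausdorff_approx_UN_eq_0 hausdorff_approx_box_eq_0) auto
  ultimately show "hausdorff_approx (real DIM('a) + 1) \<delta> (UNIV::'a set) = 0" by simp
qed

text \<open>Nullity of the whole space is needed only to make the set in \<open>hausdorff_dim_def\<close>
  nonempty; \<open>Inf {}\<close> on the reals is unspecified.\<close>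

lemma hausdorff_outer_gt_dim:
  fixes A :: "'a::euclidean_space set"
  assumes "hausdorff_dim A < s"
  shows "hausdorff_outer s A = 0"
proof -
  let ?S = "{s. 0 \<le> s \<and> hausdorff_outer s A = 0}"
  have "real DIM('a) + 1 \<in> ?S"
    using hausdorff_outer_eq_0_subset[OF subset_UNIV hausdorff_outer_UNIV_eq_0] by simp
  then have "?S \<noteq> {}" by blast
  moreover have "bdd_below ?S" by (rule bdd_belowI[where m=0]) auto
  moreover have "Inf ?S < s" using assms by (simp add: hausdorff_dim_def)
  ultimately obtain s' where "s' \<in> ?S" "s' < s" by (subst (asm) cInf_less_iff) auto
  then show ?thesis using hausdorff_outer_eq_0_mono by blast
qed

lemma AE_hausdorff_dim_le:
  fixes S :: "'q \<Rightarrow> 'a::metric_space set"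
  assumes "0 \<le> b"
    and approx: "\<And>t \<delta>. b < t \<Longrightarrow> 0 < \<delta> \<Longrightarrow> AE q in Q. hausdorff_approx t \<delta> (S q) = 0"
  shows "AE q in Q. hausdorff_dim (S q) \<le> b"
proof -
  have "AE q in Q. hausdorff_dim (S q) \<le> t" if "b < t" for t
  proof -
    have "AE q in Q. \<forall>j::nat. hausdorff_approx t (1 / Suc j) (S q) = 0"
      using approx[OF that] by (simp add: AE_all_countable)
    then show ?thesis
    proof (rule eventually_mono)
      fix q assume null: "\<forall>j::nat. hausdorff_approx t (1 / Suc j) (S q) = 0"
      have "hausdorff_approx t \<delta> (S q) = 0" if "0 < \<delta>" for \<delta>
      proof -
        obtain j :: nat where "1 / Suc j < \<delta>" using nat_approx_posE[OF \<open>0 < \<delta>\<close>] by blast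
        then show ?thesis
          using hausdorff_approx_antimono[of "1 / Suc j" \<delta> t "S q"] null by simp
      qed
      then show "hausdorff_dim (S q) \<le> t"
        using \<open>b < t\<close> assms(1) by (intro hausdorff_dim_le) (auto simp: hausdorff_outer_eq_0_iff)
    qed
  qed
  moreover have "countable {t \<in> \<rat>. b < t}" by (rule countable_subset[OF _ countable_rat]) auto
  ultimately have "AE q in Q. \<forall>t \<in> {t \<in> \<rat>. b < t}. hausdorff_dim (S q) \<le> t"
    by (subst AE_ball_countable) auto
  then show ?thesis
  proof (rule eventually_mono)
    fix q assume rat_bounds: "\<forall>t \<in> {t \<in> \<rat>. b < t}. hausdorff_dim (S q) \<le> t"
    show "hausdorff_dim (S q) \<le> b"
    proof (rule ccontr)
      assume "\<not> hausdorff_dim (S q) \<le> b"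
      then obtain t where "t \<in> \<rat>" "b < t" "t < hausdorff_dim (S q)"
        using Rats_dense_in_real[of b "hausdorff_dim (S q)"] by auto
      then show False using rat_bounds by force
    qed
  qed
qed

lemma hausdorff_outer_eq_0_cover_sequence:
  assumes "hausdorff_outer s A = 0" "0 < \<delta>"
  obtains U :: "nat \<Rightarrow> nat \<Rightarrow> 'a::metric_space set" where
    "\<And>k. A \<subseteq> (\<Union>i. U k i)" "\<And>k i. bounded (U k i)" "\<And>k i. diameter (U k i) \<le> \<delta>"
    "\<And>k. (\<Sum>i. hcost s (U k i)) \<le> ennreal (1 / Suc k)"
proof -
  have "hausdorff_approx s \<delta> A = 0" using assms by (simp add: hausdorff_outer_eq_0_iff)
  then have "\<forall>k::nat. \<exists>V. A \<subseteq> (\<Union>i. V i) \<and> (\<forall>i. bounded (V i) \<and> diameter (V i) \<le> \<delta>) \<and>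
      (\<Sum>i. hcost s (V i)) < ennreal (1 / Suc k)"
    unfolding hausdorff_approx_eq_0_iff by simp
  then obtain U where "\<forall>k. A \<subseteq> (\<Union>i. U k i) \<and> (\<forall>i. bounded (U k i) \<and> diameter (U k i) \<le> \<delta>) \<and>
      (\<Sum>i. hcost s (U k i)) < ennreal (1 / Suc k)"
    by (rule choice[THEN exE])
  then show thesis by (intro that[of U]) (auto intro: less_imp_le)
qed

section \<open>Slices of translates\<close>

lemma diameter_fst_image_le:
  fixes S :: "('a::real_normed_vector \<times> 'b::real_normed_vector) set"
  assumes "bounded S"
  shows "diameter (fst ` S) \<le> diameter S"
proof (rule diameter_le)
  show "fst ` S \<noteq> {} \<or> 0 \<le> diameter S" using diameter_ge_0[OF assms] by simp
  fix x y assume "x \<in> fst ` S" "y \<in> fst ` S"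
  then obtain p q where "p \<in> S" "q \<in> S" "x = fst p" "y = fst q" by auto
  then have "dist x y \<le> dist p q" using dist_fst_le by simp
  also have "\<dots> \<le> diameter S" using assms \<open>p \<in> S\<close> \<open>q \<in> S\<close> by (rule diameter_bounded_bound)
  finally show "norm (x - y) \<le> diameter S" by (simp add: dist_norm)
qed

lemma hcost_mono:
  assumes "0 < t" "B \<noteq> {}" "bounded A" "diameter A \<le> diameter B"
  shows "hcost t A \<le> hcost t B"
  using assms diameter_ge_0[OF assms(3)]
  by (cases "A = {}") (auto simp: hcost_def intro!: ennreal_leI powr_mono2)

lemma translation_mem_cball:
  fixes f :: "'a::real_normed_vector \<Rightarrow> 'a"
  assumes "bounded U" "u \<in> U" "(f y + z, y) \<in> U" and f: "K-lipschitz_on UNIV f"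
  shows "z \<in> cball (fst u - f (snd u)) ((1 + K) * diameter U)"
proof -
  have d: "dist u (f y + z, y) \<le> diameter U" using assms(1-3) by (rule diameter_bounded_bound)
  have "dist (fst u - f (snd u)) z = norm ((fst u - (f y + z)) + (f y - f (snd u)))"
    by (simp add: dist_norm algebra_simps)
  also have "\<dots> \<le> norm (fst u - (f y + z)) + norm (f y - f (snd u))" by (rule norm_triangle_ineq)
  also have "\<dots> = dist (fst u) (f y + z) + dist (f (snd u)) (f y)"
    by (simp add: dist_norm norm_minus_commute)
  also have "\<dots> \<le> diameter U + K * diameter U"
  proof (rule add_mono)
    show "dist (fst u) (f y + z) \<le> diameter U" using dist_fst_le[of u "(f y + z, y)"] d by simp
    have "dist (snd u) y \<le> diameter U" using dist_snd_le[of u "(f y + z, y)"] d by simp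
    then show "dist (f (snd u)) (f y) \<le> K * diameter U"
      using lipschitz_onD[OF f, of "snd u" y] lipschitz_on_nonneg[OF f]
      by (auto intro: order_trans mult_left_mono)
  qed
  finally show ?thesis by (simp add: algebra_simps)
qed

text \<open>If the graph of \<open>\<lambda>y. f y + z\<close> meets \<open>U i\<close>, then \<open>z\<close> lies in the ball of the
  \<open>i\<close>-th summand, whose volume is proportional to \<open>diameter (U i) ^ DIM('a)\<close>.\<close>

definition cover_majorant ::
    "(nat \<Rightarrow> ('a::real_normed_vector \<times> 'a) set) \<Rightarrow> real \<Rightarrow> real \<Rightarrow> ('a \<Rightarrow> 'a) \<Rightarrow> 'a \<Rightarrow> ennreal" where
  "cover_majorant U t K f z =
     (\<Sum>i. hcost t (U i) * indicator
            (cball (fst (SOME u. u \<in> U i) - f (snd (SOME u. u \<in> U i))) ((1 + K) * diameter (U i))) z)"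

lemma hausdorff_approx_slice_le_cover_majorant:
  fixes E F :: "'a::real_normed_vector set"
  assumes cover: "E \<times> F \<subseteq> (\<Union>i. U i)" and U: "\<And>i. bounded (U i)" "\<And>i. diameter (U i) \<le> \<delta>"
    and f: "K-lipschitz_on UNIV f" and "0 < t"
  shows "hausdorff_approx t \<delta> (E \<inter> (\<lambda>y. f y + z) ` F) \<le> cover_majorant U t K f z"
proof -
  define V where "V i = fst ` (U i \<inter> {p. fst p = f (snd p) + z})" for i
  have V: "bounded (V i)" "diameter (V i) \<le> diameter (U i)" for i
  proof -
    have "bounded (U i \<inter> {p. fst p = f (snd p) + z})" using U(1) by (rule bounded_subset) auto
    then show "bounded (V i)" unfolding V_def by (rule bounded_fst)
    have "diameter (V i) \<le> diameter (U i \<inter> {p. fst p = f (snd p) + z})"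
      unfolding V_def by (rule diameter_fst_image_le) fact
    also have "\<dots> \<le> diameter (U i)" using U(1) by (rule diameter_subset[rotated]) auto
    finally show "diameter (V i) \<le> diameter (U i)" .
  qed
  have "E \<inter> (\<lambda>y. f y + z) ` F \<subseteq> (\<Union>i. V i)"
  proof
    fix x assume "x \<in> E \<inter> (\<lambda>y. f y + z) ` F"
    then obtain y where "x = f y + z" "(x, y) \<in> E \<times> F" by auto
    then obtain i where "(x, y) \<in> U i" using cover by blast
    then show "x \<in> (\<Union>i. V i)" using \<open>x = f y + z\<close> unfolding V_def by force
  qed
  then have "hausdorff_approx t \<delta> (E \<inter> (\<lambda>y. f y + z) ` F) \<le> (\<Sum>i. hcost t (V i))"
    unfolding hausdorff_approx_def using V(1) order_trans[OF V(2) U(2)] by (intro INF_lower) auto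
  also have "\<dots> \<le> cover_majorant U t K f z"
    unfolding cover_majorant_def
  proof (intro suminf_le allI)
    fix i
    define u where "u = (SOME u. u \<in> U i)"
    show "hcost t (V i) \<le> hcost t (U i) * indicator
            (cball (fst (SOME u. u \<in> U i) - f (snd (SOME u. u \<in> U i))) ((1 + K) * diameter (U i))) z"
    proof (cases "V i = {}")
      case True then show ?thesis by (simp add: hcost_def)
    next
      case False
      then obtain y where y: "(f y + z, y) \<in> U i" by (auto simp: V_def)
      then have "u \<in> U i" unfolding u_def by (rule someI)
      have "z \<in> cball (fst u - f (snd u)) ((1 + K) * diameter (U i))"
        using U(1) \<open>u \<in> U i\<close> y f by (rule translation_mem_cball)
      moreover have "hcost t (V i) \<le> hcost t (U i)"
        using \<open>0 < t\<close> V y by (intro hcost_mono) auto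
      ultimately show ?thesis by (simp add: u_def)
    qed
  qed simp_all
  finally show ?thesis .
qed

lemma nn_integral_cover_majorant:
  fixes U :: "nat \<Rightarrow> ('a::euclidean_space \<times> 'a) set"
  assumes U: "\<And>i. bounded (U i)" and "0 \<le> K" "0 < t"
  shows "(\<integral>\<^sup>+z. cover_majorant U t K f z \<partial>lborel)
           = ennreal (unit_ball_vol DIM('a) * (1 + K) ^ DIM('a)) * (\<Sum>i. hcost (t + DIM('a)) (U i))"
proof -
  let ?m = "DIM('a)" and ?C = "unit_ball_vol DIM('a) * (1 + K) ^ DIM('a)"
  have summand: "hcost t (U i) * emeasure lborel (cball w ((1 + K) * diameter (U i)))
                = ennreal ?C * hcost (t + ?m) (U i)" for i and w :: 'a
  proof (cases "U i = {}")
    case True then show ?thesis by (simp add: hcost_def)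
  next
    case False
    define d where "d = diameter (U i)"
    have "0 \<le> d" unfolding d_def using U by (rule diameter_ge_0)
    have hcost: "hcost t (U i) = ennreal (d powr t)" "hcost (t + ?m) (U i) = ennreal (d powr (t + ?m))"
      using False \<open>0 < t\<close> by (simp_all add: hcost_def d_def add_pos_nonneg)
    have "d powr t * d ^ ?m = d powr (t + ?m)"
      using \<open>0 \<le> d\<close> \<open>0 < t\<close> by (cases "d = 0") (simp_all add: powr_add powr_realpow)
    then have "d powr t * (unit_ball_vol ?m * ((1 + K) * d) ^ ?m) = ?C * d powr (t + ?m)"
      by (simp add: power_mult_distrib mult_ac flip: \<open>d powr t * d ^ ?m = d powr (t + ?m)\<close>)
    then show ?thesis
      using \<open>0 \<le> d\<close> \<open>0 \<le> K\<close>
      by (simp add: hcost emeasure_cball flip: d_def ennreal_mult)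
  qed
  have "(\<integral>\<^sup>+z. cover_majorant U t K f z \<partial>lborel)
      = (\<Sum>i. \<integral>\<^sup>+z. hcost t (U i) * indicator
              (cball (fst (SOME u. u \<in> U i) - f (snd (SOME u. u \<in> U i))) ((1 + K) * diameter (U i))) z \<partial>lborel)"
    unfolding cover_majorant_def
    by (rule nn_integral_suminf) (auto intro!: borel_measurable_times_ennreal borel_measurable_indicator)
  also have "\<dots> = (\<Sum>i. ennreal ?C * hcost (t + ?m) (U i))"
    by (simp add: nn_integral_cmult_indicator summand)
  finally show ?thesis by simp
qed

lemma cover_majorant_measurable:
  fixes fq :: "'q \<Rightarrow> 'a::euclidean_space \<Rightarrow> 'a"
  assumes "Kq \<in> borel_measurable Q" "zq \<in> borel_measurable Q" "\<And>y. (\<lambda>q. fq q y) \<in> borel_measurable Q"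
  shows "(\<lambda>q. cover_majorant U t (Kq q) (fq q) (zq q)) \<in> borel_measurable Q"
  unfolding cover_majorant_def
proof (rule borel_measurable_suminf_order)
  fix i
  define u where "u = (SOME u. u \<in> U i)"
  have [measurable]: "Kq \<in> borel_measurable Q" "zq \<in> borel_measurable Q"
    "(\<lambda>q. fq q (snd u)) \<in> borel_measurable Q"
    using assms by auto
  have "{q \<in> space Q. zq q \<in> cball (fst u - fq q (snd u)) ((1 + Kq q) * diameter (U i))} \<in> sets Q"
    unfolding mem_cball by (rule borel_measurable_le; measurable)
  then show "(\<lambda>q. hcost t (U i) * indicator
      (cball (fst (SOME u. u \<in> U i) - fq q (snd (SOME u. u \<in> U i))) ((1 + Kq q) * diameter (U i))) (zq q))
      \<in> borel_measurable Q"
    unfolding u_def[symmetric]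
    by (intro borel_measurable_times_ennreal measurable_const borel_measurable_indicator') auto
qed

text \<open>The infimum is countable, so the majorant stays measurable in all parameters.\<close>

definition slice_majorant ::
    "(nat \<Rightarrow> nat \<Rightarrow> ('a::real_normed_vector \<times> 'a) set) \<Rightarrow> real \<Rightarrow> real \<Rightarrow> ('a \<Rightarrow> 'a) \<Rightarrow> 'a \<Rightarrow> ennreal" where
  "slice_majorant U t K f z = (INF k. cover_majorant (U k) t K f z)"

lemma hausdorff_approx_slice_le_slice_majorant:
  fixes E F :: "'a::real_normed_vector set"
  assumes "\<And>k. E \<times> F \<subseteq> (\<Union>i. U k i)" "\<And>k i. bounded (U k i)" "\<And>k i. diameter (U k i) \<le> \<delta>"
    and "K-lipschitz_on UNIV f" "0 < t"
  shows "hausdorff_approx t \<delta> (E \<inter> (\<lambda>y. f y + z) ` F) \<le> slice_majorant U t K f z"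
  unfolding slice_majorant_def using assms
  by (intro INF_greatest hausdorff_approx_slice_le_cover_majorant)

lemma slice_majorant_measurable:
  fixes fq :: "'q \<Rightarrow> 'a::euclidean_space \<Rightarrow> 'a"
  assumes "Kq \<in> borel_measurable Q" "zq \<in> borel_measurable Q" "\<And>y. (\<lambda>q. fq q y) \<in> borel_measurable Q"
  shows "(\<lambda>q. slice_majorant U t (Kq q) (fq q) (zq q)) \<in> borel_measurable Q"
  unfolding slice_majorant_def using assms
  by (intro borel_measurable_INF cover_majorant_measurable) auto

lemma AE_slice_majorant_eq_0:
  fixes U :: "nat \<Rightarrow> nat \<Rightarrow> ('a::euclidean_space \<times> 'a) set" and t :: real
  assumes U: "\<And>k i. bounded (U k i)" "\<And>k. (\<Sum>i. hcost (t + DIM('a)) (U k i)) \<le> ennreal (1 / Suc k)"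
    and "0 \<le> K" "0 < t"
  shows "AE z in lborel. slice_majorant U t K f z = 0"
proof -
  define C where "C = unit_ball_vol DIM('a) * (1 + K) ^ DIM('a)"
  have "C \<ge> 0" using \<open>0 \<le> K\<close> by (simp add: C_def)
  have bound: "(\<integral>\<^sup>+z. slice_majorant U t K f z \<partial>lborel) \<le> ennreal (C / Suc k)" for k
  proof -
    have "(\<integral>\<^sup>+z. slice_majorant U t K f z \<partial>lborel) \<le> (\<integral>\<^sup>+z. cover_majorant (U k) t K f z \<partial>lborel)"
      unfolding slice_majorant_def by (intro nn_integral_mono INF_lower) auto
    also have "\<dots> = ennreal C * (\<Sum>i. hcost (t + DIM('a)) (U k i))"
      unfolding C_def using U(1) assms(3,4) by (rule nn_integral_cover_majorant)
    also have "\<dots> \<le> ennreal C * ennreal (1 / Suc k)" using U(2) by (rule mult_left_mono) simp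
    also have "\<dots> = ennreal (C / Suc k)" using \<open>C \<ge> 0\<close> by (simp add: ennreal_mult[symmetric])
    finally show ?thesis .
  qed
  have "(\<lambda>k. ennreal (C / Suc k)) \<longlonglongrightarrow> 0"
    using tendsto_ennrealI[OF LIMSEQ_Suc[OF lim_const_over_n[of C]]] by simp
  then have "(\<integral>\<^sup>+z. slice_majorant U t K f z \<partial>lborel) \<le> 0"
    using bound by (intro LIMSEQ_le_const) auto
  moreover have "slice_majorant U t K f \<in> borel_measurable lborel"
    using slice_majorant_measurable[where Kq="\<lambda>_. K" and fq="\<lambda>_. f" and zq="\<lambda>z. z" and Q=lborel] by simp
  ultimately show ?thesis by (simp add: nn_integral_0_iff_AE)
qed

section \<open>Rigid motions and similarities\<close>

lemma AE_pair_measure_eq_0: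
  fixes h :: "'a \<times> 'b \<Rightarrow> ennreal"
  assumes "sigma_finite_measure N" "h \<in> borel_measurable (M \<Otimes>\<^sub>M N)"
    and slices: "\<And>x. x \<in> space M \<Longrightarrow> AE y in N. h (x, y) = 0"
  shows "AE p in M \<Otimes>\<^sub>M N. h p = 0"
proof -
  interpret N: sigma_finite_measure N by fact
  have "integral\<^sup>N (M \<Otimes>\<^sub>M N) h = (\<integral>\<^sup>+x. \<integral>\<^sup>+y. h (x, y) \<partial>N \<partial>M)"
    by (rule N.nn_integral_fst[symmetric]) fact
  also have "\<dots> = (\<integral>\<^sup>+x. 0 \<partial>M)"
    using slices measurable_Pair2[OF assms(2)]
    by (intro nn_integral_cong) (simp add: nn_integral_0_iff_AE)
  finally show ?thesis using nn_integral_0_iff_AE[OF assms(2)] by simp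
qed

lemma orthogonal_matrix_lipschitz:
  assumes "orthogonal_matrix (R::real^'n^'n)"
  shows "1-lipschitz_on UNIV ((*v) R)"
proof -
  have "orthogonal_transformation ((*v) R)"
    using assms by (simp add: orthogonal_transformation_matrix)
  then show ?thesis by (intro lipschitz_onI) (simp_all add: orthogonal_transformation_isometry)
qed

lemma measurable_mult_vec:
  fixes M :: "(real^'n^'m) measure"
  assumes "sets M = sets (restrict_space borel S)"
  shows "(\<lambda>R. R *v y) \<in> borel_measurable M"
proof -
  have "(\<lambda>R::real^'n^'m. R *v y) \<in> borel_measurable borel"
    by (rule borel_measurable_continuous_onI) (simp add: matrix_vector_mult_def continuous_intros)
  then have "(\<lambda>R::real^'n^'m. R *v y) \<in> borel_measurable (restrict_space borel S)"
    by (rule measurable_restrict_space1)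
  then show ?thesis unfolding measurable_cong_sets[OF assms refl] .
qed

lemma AE_rigid_motion_hausdorff_approx_eq_0:
  fixes E F :: "(real^'n) set" and \<mu> :: "(real^'n^'n) measure" and t :: real
  assumes \<mu>: "haar_orthogonal \<mu>" and "hausdorff_outer (t + CARD('n)) (E \<times> F) = 0" "0 < t" "0 < \<delta>"
  shows "AE p in \<mu> \<Otimes>\<^sub>M lborel. hausdorff_approx t \<delta> (E \<inter> (\<lambda>x. fst p *v x + snd p) ` F) = 0"
proof -
  have "hausdorff_outer (t + DIM(real^'n)) (E \<times> F) = 0" using assms(2) by simp
  from hausdorff_outer_eq_0_cover_sequence[OF this \<open>0 < \<delta>\<close>] obtain U where U:
    "\<And>k. E \<times> F \<subseteq> (\<Union>i. U k i)" "\<And>k i. bounded (U k i)" "\<And>k i. diameter (U k i) \<le> \<delta>"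
    "\<And>k. (\<Sum>i. hcost (t + DIM(real^'n)) (U k i)) \<le> ennreal (1 / Suc k)"
    by blast
  have [measurable]: "(\<lambda>R. R *v y) \<in> borel_measurable \<mu>" for y :: "real^'n"
    using \<mu> by (intro measurable_mult_vec) (simp add: haar_orthogonal_def)
  have "AE p in \<mu> \<Otimes>\<^sub>M lborel. slice_majorant U t 1 ((*v) (fst p)) (snd p) = 0"
  proof (rule AE_pair_measure_eq_0)
    show "(\<lambda>p. slice_majorant U t 1 ((*v) (fst p)) (snd p)) \<in> borel_measurable (\<mu> \<Otimes>\<^sub>M lborel)"
      by (rule slice_majorant_measurable) measurable
    show "AE z in lborel. slice_majorant U t 1 ((*v) (fst (R, z))) (snd (R, z)) = 0" for R
      using AE_slice_majorant_eq_0[OF U(2,4)] \<open>0 < t\<close> by simp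
  qed (rule lborel.sigma_finite_measure_axioms)
  moreover have "AE p in \<mu> \<Otimes>\<^sub>M lborel. orthogonal_matrix (fst p)"
    using \<mu> by (intro AE_I2) (auto simp: haar_orthogonal_def space_pair_measure)
  ultimately show ?thesis
  proof eventually_elim
    case (elim p)
    have "hausdorff_approx t \<delta> (E \<inter> (\<lambda>x. fst p *v x + snd p) ` F) \<le> slice_majorant U t 1 ((*v) (fst p)) (snd p)"
      using U(1-3) orthogonal_matrix_lipschitz[OF elim(2)] \<open>0 < t\<close>
      by (rule hausdorff_approx_slice_le_slice_majorant)
    then show ?case using elim(1) by simp
  qed
qed

lemma AE_similarity_hausdorff_approx_eq_0:
  fixes E F :: "(real^'n) set" and \<mu> :: "(real^'n^'n) measure" and t :: real
  assumes \<mu>: "haar_orthogonal \<mu>" and "hausdorff_outer (t + CARD('n)) (E \<times> F) = 0" "0 < t" "0 < \<delta>"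
  shows "AE p in \<mu> \<Otimes>\<^sub>M (restrict_space lborel {0<..} \<Otimes>\<^sub>M lborel).
           hausdorff_approx t \<delta> (E \<inter> (\<lambda>x. fst (snd p) *\<^sub>R (fst p *v x) + snd (snd p)) ` F) = 0"
proof -
  let ?Mc = "restrict_space lborel {0::real<..}"
  have "hausdorff_outer (t + DIM(real^'n)) (E \<times> F) = 0" using assms(2) by simp
  from hausdorff_outer_eq_0_cover_sequence[OF this \<open>0 < \<delta>\<close>] obtain U where U:
    "\<And>k. E \<times> F \<subseteq> (\<Union>i. U k i)" "\<And>k i. bounded (U k i)" "\<And>k i. diameter (U k i) \<le> \<delta>"
    "\<And>k. (\<Sum>i. hcost (t + DIM(real^'n)) (U k i)) \<le> ennreal (1 / Suc k)"
    by blast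
  have [measurable]: "(\<lambda>R. R *v y) \<in> borel_measurable \<mu>" for y :: "real^'n"
    using \<mu> by (intro measurable_mult_vec) (simp add: haar_orthogonal_def)
  have [measurable]: "(\<lambda>c. c) \<in> borel_measurable ?Mc"
    by (rule measurable_restrict_space1) simp
  have sf: "sigma_finite_measure (?Mc \<Otimes>\<^sub>M lborel)"
    by (intro sigma_finite_pair_measure sigma_finite_measure_restrict_space lborel.sigma_finite_measure_axioms)
      simp
  have "AE p in \<mu> \<Otimes>\<^sub>M (?Mc \<Otimes>\<^sub>M lborel).
          slice_majorant U t (fst (snd p)) (\<lambda>y. fst (snd p) *\<^sub>R (fst p *v y)) (snd (snd p)) = 0"
  proof (rule AE_pair_measure_eq_0[OF sf])
    show "(\<lambda>p. slice_majorant U t (fst (snd p)) (\<lambda>y. fst (snd p) *\<^sub>R (fst p *v y)) (snd (snd p)))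
            \<in> borel_measurable (\<mu> \<Otimes>\<^sub>M (?Mc \<Otimes>\<^sub>M lborel))"
      by (rule slice_majorant_measurable) measurable
    fix R
    show "AE cz in ?Mc \<Otimes>\<^sub>M lborel.
            slice_majorant U t (fst (snd (R, cz))) (\<lambda>y. fst (snd (R, cz)) *\<^sub>R (fst (R, cz) *v y)) (snd (snd (R, cz))) = 0"
    proof (rule AE_pair_measure_eq_0)
      show "(\<lambda>cz. slice_majorant U t (fst (snd (R, cz))) (\<lambda>y. fst (snd (R, cz)) *\<^sub>R (fst (R, cz) *v y)) (snd (snd (R, cz))))
              \<in> borel_measurable (?Mc \<Otimes>\<^sub>M lborel)"
        by simp (rule slice_majorant_measurable; measurable)
      show "AE z in lborel. slice_majorant U t (fst (snd (R, c, z))) (\<lambda>y. fst (snd (R, c, z)) *\<^sub>R (fst (R, c, z) *v y))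
              (snd (snd (R, c, z))) = 0" if "c \<in> space ?Mc" for c
        using that AE_slice_majorant_eq_0[OF U(2,4)] \<open>0 < t\<close> by simp
    qed (rule lborel.sigma_finite_measure_axioms)
  qed
  moreover have "AE p in \<mu> \<Otimes>\<^sub>M (?Mc \<Otimes>\<^sub>M lborel). orthogonal_matrix (fst p) \<and> 0 < fst (snd p)"
    using \<mu> by (intro AE_I2) (auto simp: haar_orthogonal_def space_pair_measure)
  ultimately show ?thesis
  proof eventually_elim
    case (elim p)
    then have "(fst (snd p) * 1)-lipschitz_on UNIV (\<lambda>y. fst (snd p) *\<^sub>R (fst p *v y))"
      by (intro lipschitz_on_cmult_nonneg orthogonal_matrix_lipschitz) auto
    then have "hausdorff_approx t \<delta> (E \<inter> (\<lambda>x. fst (snd p) *\<^sub>R (fst p *v x) + snd (snd p)) ` F)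
        \<le> slice_majorant U t (fst (snd p)) (\<lambda>y. fst (snd p) *\<^sub>R (fst p *v y)) (snd (snd p))"
      using U(1-3) \<open>0 < t\<close> by (intro hausdorff_approx_slice_le_slice_majorant) auto
    then show ?case using elim(1) by simp
  qed
qed

theorem mainTheorem2:
  fixes E F :: "(real^'n) set" and \<mu> :: "(real^'n^'n) measure"
  assumes "haar_orthogonal \<mu>"
  shows "(AE p in \<mu> \<Otimes>\<^sub>M lborel.
           hausdorff_dim (E \<inter> (\<lambda>x. fst p *v x + snd p) ` F)
             \<le> max 0 (hausdorff_dim (E \<times> F) - real CARD('n)))
       \<and> (AE p in \<mu> \<Otimes>\<^sub>M (restrict_space lborel {0<..} \<Otimes>\<^sub>M lborel).
           hausdorff_dim (E \<inter> (\<lambda>x. fst (snd p) *\<^sub>R (fst p *v x) + snd (snd p)) ` F)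
             \<le> max 0 (hausdorff_dim (E \<times> F) - real CARD('n)))"
proof -
  let ?b = "max 0 (hausdorff_dim (E \<times> F) - real CARD('n))"
  have null: "hausdorff_outer (t + CARD('n)) (E \<times> F) = 0" if "?b < t" for t
    using that by (intro hausdorff_outer_gt_dim) simp
  show ?thesis
  proof (intro conjI AE_hausdorff_dim_le)
    fix t \<delta> :: real assume "?b < t" "0 < \<delta>"
    then show "AE p in \<mu> \<Otimes>\<^sub>M lborel. hausdorff_approx t \<delta> (E \<inter> (\<lambda>x. fst p *v x + snd p) ` F) = 0"
      using null by (intro AE_rigid_motion_hausdorff_approx_eq_0 assms) auto
  next
    fix t \<delta> :: real assume "?b < t" "0 < \<delta>"
    then show "AE p in \<mu> \<Otimes>\<^sub>M (restrict_space lborel {0<..} \<Otimes>\<^sub>M lborel).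
        hausdorff_approx t \<delta> (E \<inter> (\<lambda>x. fst (snd p) *\<^sub>R (fst p *v x) + snd (snd p)) ` F) = 0"
      using null by (intro AE_similarity_hausdorff_approx_eq_0 assms) auto
  qed simp_all
qed

end
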